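(* Let $\mathbb{S}=(S,\Sigma,\{\tau_a\mid a\in L\})$ be an LMP, let $\Sigma_0\subseteq\Sigma$ be a sub-$\sigma$-algebra with $\mathcal{R}(\Sigma_0)=\mathcal{R}^T(\Sigma_0)$, and put $R_0=\mathcal{R}(\Sigma_0)$. If $\lambda$ is a limit ordinal and $\Sigma(\mathcal{R}(\Sigma_\lambda))=\Sigma_\lambda$, then $\mathcal{R}(\Sigma_\lambda)$ is a state bisimulation.
   Context: An LMP is a triple $(S,\Sigma,\{\tau_a\mid a\in L\})$ with $(S,\Sigma)$ a measurable space, $L$ countable, and each $\tau_a:S\times\Sigma\to[0,1]$ a Markov kernel (subprobability measure in the second argument, measurable in the first). For $R\subseteq S\times S$, $A$ is $R$-closed if $x\in A$, $xRs$ imply $s\in A$; $\Sigma(R)$ is the family of $R$-closed members of $\Sigma$. For $\Gamma\subseteq\mathcal{P}(S)$, $\mathcal{R}(\Gamma)=\{(s,t):\forall A\in\Gamma\,(s\in A\iff t\in A)\}$; for $\Lambda\subseteq\Sigma$, $\mathcal{R}^T(\Lambda)=\{(s,t):\forall a\in L\,\forall E\in\Lambda\ \tau_a(s,E)=\tau_a(t,E)\}$. $\mathcal{O}(R)=\mathcal{R}^T(\Sigma(R))$, $\mathcal{G}(\Lambda)=\Sigma(\mathcal{R}^T(\Lambda))$. Iterates: $R_{\alpha+1}=\mathcal{O}(R_\alpha)$, $R_\lambda=\bigcap_{\alpha<\lambda}R_\alpha$ for limit $\lambda$; $\Sigma_{\alpha+1}=\mathcal{G}(\Sigma_\alpha)$,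 $\Sigma_\lambda=\sigma(\bigcup_{\alpha<\lambda}\Sigma_\alpha)$ for limit $\lambda$. A state bisimulation is a symmetric relation $R$ on $S$ such that whenever $sRt$ and $C\in\Sigma(R)$, $\tau_a(s,C)=\tau_a(t,C)$ for all $a\in L$. *)

theory Defs
  imports "HOL-Probability.Probability"
begin

text \<open>A labelled Markov process: measurable space M = (S, Sigma), countable label set L,
  and for each label a Markov kernel tau a : S -> subprobability measures on (S, Sigma).
  tau_a(s,E) is rendered as measure (tau a s) E.\<close>
definition LMP :: "'a measure \<Rightarrow> 'l set \<Rightarrow> ('l \<Rightarrow> 'a \<Rightarrow> 'a measure) \<Rightarrow> bool" where
  "LMP M L \<tau> \<longleftrightarrow> countable L \<and> (\<forall>a\<in>L. \<tau> a \<in> M \<rightarrow>\<^sub>M subprob_algebra M)"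

definition R_closed :: "('a \<times> 'a) set \<Rightarrow> 'a set \<Rightarrow> bool" where
  "R_closed R A \<longleftrightarrow> (\<forall>x s. x \<in> A \<longrightarrow> (x, s) \<in> R \<longrightarrow> s \<in> A)"

definition closed_sets :: "'a measure \<Rightarrow> ('a \<times> 'a) set \<Rightarrow> 'a set set" where
  "closed_sets M R = {A \<in> sets M. R_closed R A}"

definition rel_of :: "'a measure \<Rightarrow> 'a set set \<Rightarrow> ('a \<times> 'a) set" where
  "rel_of M \<Gamma> = {(s, t). s \<in> space M \<and> t \<in> space M \<and> (\<forall>A\<in>\<Gamma>. s \<in> A \<longleftrightarrow> t \<in> A)}"

definition relT :: "'a measure \<Rightarrow> 'l set \<Rightarrow> ('l \<Rightarrow> 'a \<Rightarrow> 'a measure) \<Rightarrow> 'a set set \<Rightarrow> ('a \<times> 'a) set" where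
  "relT M L \<tau> \<Lambda> = {(s, t). s \<in> space M \<and> t \<in> space M \<and>
      (\<forall>a\<in>L. \<forall>E\<in>\<Lambda>. measure (\<tau> a s) E = measure (\<tau> a t) E)}"

definition opG :: "'a measure \<Rightarrow> 'l set \<Rightarrow> ('l \<Rightarrow> 'a \<Rightarrow> 'a measure) \<Rightarrow> 'a set set \<Rightarrow> 'a set set" where
  "opG M L \<tau> \<Lambda> = closed_sets M (relT M L \<tau> \<Lambda>)"

text \<open>Ordinals are modelled as elements of an arbitrary well-ordered type 'o.
  alpha is zero if it has no predecessor, a successor if the set of its predecessors
  has a greatest element, and a limit otherwise.\<close>
definition is_limit :: "'o::wellorder \<Rightarrow> bool" where
  "is_limit \<alpha> \<longleftrightarrow> (\<exists>\<beta>. \<beta> < \<alpha>) \<and> \<not> (\<exists>\<beta><\<alpha>. \<forall>\<gamma><\<alpha>. \<gamma> \<le> \<beta>)"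

text \<open>Transfinite iterates: Sigma_0 given, Sigma_(alpha+1) = G(Sigma_alpha),
  Sigma_lambda = sigma(Union_{alpha<lambda} Sigma_alpha) for limit lambda.\<close>
definition sigma_iter :: "'a measure \<Rightarrow> 'l set \<Rightarrow> ('l \<Rightarrow> 'a \<Rightarrow> 'a measure) \<Rightarrow> 'a set set
    \<Rightarrow> 'o::wellorder \<Rightarrow> 'a set set" where
  "sigma_iter M L \<tau> \<Sigma>0 = wfrec {(x, y). x < y} (\<lambda>f \<alpha>.
      if \<not> (\<exists>\<beta>. \<beta> < \<alpha>) then \<Sigma>0
      else if (\<exists>\<beta><\<alpha>. \<forall>\<gamma><\<alpha>. \<gamma> \<le> \<beta>)
        then opG M L \<tau> (f (THE \<beta>. \<beta> < \<alpha> \<and> (\<forall>\<gamma><\<alpha>. \<gamma> \<le> \<beta>)))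
      else sigma_sets (space M) (\<Union>\<beta>\<in>{\<beta>. \<beta> < \<alpha>}. f \<beta>))"

definition state_bisim :: "'a measure \<Rightarrow> 'l set \<Rightarrow> ('l \<Rightarrow> 'a \<Rightarrow> 'a measure) \<Rightarrow> ('a \<times> 'a) set \<Rightarrow> bool" where
  "state_bisim M L \<tau> R \<longleftrightarrow> R \<subseteq> space M \<times> space M \<and> sym R \<and>
     (\<forall>s t. (s, t) \<in> R \<longrightarrow> (\<forall>C\<in>closed_sets M R. \<forall>a\<in>L. measure (\<tau> a s) C = measure (\<tau> a t) C))"

end

theory Submission imports Defs begin

text \<open>Every stage \<open>\<Sigma>\<^sub>\<alpha>\<close> is contained in \<open>\<G>(\<Sigma>\<^sub>\<alpha>)\<close>, so the stages increase and
  \<open>\<Sigma>\<^sub>\<lambda>\<close> is generated by the \<open>\<inter>\<close>-stable union \<open>G\<close> of the earlier stages, which contains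
  \<open>\<G>(\<Sigma>\<^sub>\<beta>)\<close> for each \<open>\<beta> < \<lambda>\<close>. The sets \<open>{x. \<tau>\<^sub>a(x, E) = c}\<close> with \<open>E \<in> \<Sigma>\<^sub>\<beta>\<close> are
  \<open>\<R>\<^sup>T(\<Sigma>\<^sub>\<beta>)\<close>-closed, hence lie in \<open>\<Sigma>\<^sub>\<lambda>\<close>; so states related by \<open>\<R>(\<Sigma>\<^sub>\<lambda>)\<close> give the
  same probabilities to the sets in \<open>G\<close>, and by Dynkin's \<open>\<pi>\<close>-\<open>\<lambda>\<close> theorem to all of
  \<open>\<Sigma>\<^sub>\<lambda> = \<Sigma>(\<R>(\<Sigma>\<^sub>\<lambda>))\<close>.\<close>

lemma ordinal_cases:
  fixes \<alpha> :: "'o::wellorder"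
  obtains "\<not> (\<exists>\<beta>. \<beta> < \<alpha>)"
    | \<beta> where "\<beta> < \<alpha>" "\<forall>\<gamma><\<alpha>. \<gamma> \<le> \<beta>"
    | "is_limit \<alpha>"
  unfolding is_limit_def by blast

lemma limit_successor_less:
  fixes \<beta> lam :: "'o::wellorder"
  assumes "is_limit lam" "\<beta> < lam"
  obtains s where "s < lam" "\<beta> < s" "\<forall>\<gamma><s. \<gamma> \<le> \<beta>"
proof
  from assms obtain g where g: "g < lam" "\<beta> < g"
    unfolding is_limit_def by (meson not_le)
  show "\<beta> < (LEAST \<gamma>. \<beta> < \<gamma>)" using g by (metis LeastI)
  show "(LEAST \<gamma>. \<beta> < \<gamma>) < lam" using g by (meson Least_le le_less_trans)
  show "\<forall>\<gamma><(LEAST \<gamma>. \<beta> < \<gamma>). \<gamma> \<le> \<beta>" by (meson not_less_Least not_le)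
qed

lemma the_greatest_predecessor:
  fixes \<alpha> \<beta> :: "'o::wellorder"
  assumes "\<beta> < \<alpha>" "\<forall>\<gamma><\<alpha>. \<gamma> \<le> \<beta>"
  shows "(THE \<beta>. \<beta> < \<alpha> \<and> (\<forall>\<gamma><\<alpha>. \<gamma> \<le> \<beta>)) = \<beta>"
  by (rule the_equality) (use assms in \<open>auto intro: order.antisym\<close>)

lemma sigma_iter_unfold:
  "sigma_iter M L \<tau> \<Sigma>0 (\<alpha>::'o::wellorder) = (if \<not> (\<exists>\<beta>. \<beta> < \<alpha>) then \<Sigma>0
      else if (\<exists>\<beta><\<alpha>. \<forall>\<gamma><\<alpha>. \<gamma> \<le> \<beta>)
        then opG M L \<tau> (sigma_iter M L \<tau> \<Sigma>0 (THE \<beta>. \<beta> < \<alpha> \<and> (\<forall>\<gamma><\<alpha>. \<gamma> \<le> \<beta>)))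
      else sigma_sets (space M) (\<Union>\<beta>\<in>{\<beta>. \<beta> < \<alpha>}. sigma_iter M L \<tau> \<Sigma>0 \<beta>))"
proof -
  have "(THE \<beta>. \<beta> < \<alpha> \<and> (\<forall>\<gamma><\<alpha>. \<gamma> \<le> \<beta>)) < \<alpha>" if "\<exists>\<beta><\<alpha>. \<forall>\<gamma><\<alpha>. \<gamma> \<le> \<beta>"
    using that the_greatest_predecessor by metis
  then show ?thesis
    unfolding sigma_iter_def by (subst wfrec[OF wf]) (auto simp: cut_apply)
qed

lemma sigma_iter_bottom:
  "\<not> (\<exists>\<beta>. \<beta> < \<alpha>) \<Longrightarrow> sigma_iter M L \<tau> \<Sigma>0 (\<alpha>::'o::wellorder) = \<Sigma>0"
  by (subst sigma_iter_unfold) simp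

lemma sigma_iter_successor:
  fixes \<alpha> \<beta> :: "'o::wellorder"
  assumes "\<beta> < \<alpha>" "\<forall>\<gamma><\<alpha>. \<gamma> \<le> \<beta>"
  shows "sigma_iter M L \<tau> \<Sigma>0 \<alpha> = opG M L \<tau> (sigma_iter M L \<tau> \<Sigma>0 \<beta>)"
  using assms by (subst sigma_iter_unfold) (auto simp: the_greatest_predecessor)

lemma sigma_iter_limit:
  "is_limit \<alpha> \<Longrightarrow> sigma_iter M L \<tau> \<Sigma>0 (\<alpha>::'o::wellorder)
     = sigma_sets (space M) (\<Union>\<beta>\<in>{\<beta>. \<beta> < \<alpha>}. sigma_iter M L \<tau> \<Sigma>0 \<beta>)"
  unfolding is_limit_def by (subst sigma_iter_unfold) auto

lemma closed_sets_sigma_algebra: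
  assumes "sym R" "R \<subseteq> space M \<times> space M"
  shows "sigma_algebra (space M) (closed_sets M R)"
  unfolding sigma_algebra_iff2 closed_sets_def R_closed_def
proof (intro conjI allI ballI impI)
  fix A assume "A \<in> {A \<in> sets M. \<forall>x s. x \<in> A \<longrightarrow> (x, s) \<in> R \<longrightarrow> s \<in> A}"
  then show "space M - A \<in> {A \<in> sets M. \<forall>x s. x \<in> A \<longrightarrow> (x, s) \<in> R \<longrightarrow> s \<in> A}"
    using assms by (auto simp: sym_def)
qed (use sets.sets_into_space in auto)

lemma opG_sigma_algebra: "sigma_algebra (space M) (opG M L \<tau> \<Lambda>)"
  unfolding opG_def by (rule closed_sets_sigma_algebra) (auto simp: sym_def relT_def)

lemma opG_mono: "\<Lambda> \<subseteq> \<Lambda>' \<Longrightarrow> opG M L \<tau> \<Lambda> \<subseteq> opG M L \<tau> \<Lambda>'"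
  unfolding opG_def closed_sets_def R_closed_def relT_def by blast

lemma opG_subset_sets: "opG M L \<tau> \<Lambda> \<subseteq> sets M"
  unfolding opG_def closed_sets_def by auto

lemma subset_closed_sets_rel_of: "\<Lambda> \<subseteq> sets M \<Longrightarrow> \<Lambda> \<subseteq> closed_sets M (rel_of M \<Lambda>)"
  unfolding closed_sets_def R_closed_def rel_of_def by auto

text \<open>The two invariants must be proved together: at a successor \<open>\<Sigma>\<^sub>\<beta>\<^sub>+\<^sub>1 = \<G>(\<Sigma>\<^sub>\<beta>)\<close>,
  monotonicity is exactly \<open>\<Sigma>\<^sub>\<beta> \<subseteq> \<G>(\<Sigma>\<^sub>\<beta>)\<close>.\<close>

lemma sigma_iter_mono_and_subset_opG:
  assumes "\<Sigma>0 \<subseteq> opG M L \<tau> \<Sigma>0"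
  shows "(\<forall>\<beta><\<gamma>. sigma_iter M L \<tau> \<Sigma>0 \<beta> \<subseteq> sigma_iter M L \<tau> \<Sigma>0 (\<gamma>::'o::wellorder))
     \<and> sigma_iter M L \<tau> \<Sigma>0 \<gamma> \<subseteq> opG M L \<tau> (sigma_iter M L \<tau> \<Sigma>0 \<gamma>)"
proof (induction \<gamma> rule: less_induct)
  case (less \<gamma>)
  let ?S = "sigma_iter M L \<tau> \<Sigma>0"
  show ?case
  proof (cases \<gamma> rule: ordinal_cases)
    case 1
    with assms show ?thesis by (simp add: sigma_iter_bottom)
  next
    case (2 p)
    then have eq: "?S \<gamma> = opG M L \<tau> (?S p)" by (rule sigma_iter_successor)
    from less.IH[OF \<open>p < \<gamma>\<close>] have below_p: "\<forall>\<beta><p. ?S \<beta> \<subseteq> ?S p"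
      and p_sub: "?S p \<subseteq> ?S \<gamma>" unfolding eq by blast+
    have "?S \<beta> \<subseteq> ?S \<gamma>" if "\<beta> < \<gamma>" for \<beta>
    proof (cases "\<beta> = p")
      case False
      from 2(2) that have "\<beta> \<le> p" by blast
      with False have "\<beta> < p" by simp
      with below_p p_sub show ?thesis by blast
    qed (use p_sub in simp)
    moreover have "?S \<gamma> \<subseteq> opG M L \<tau> (?S \<gamma>)"
      using opG_mono[OF p_sub] eq by simp
    ultimately show ?thesis by blast
  next
    case 3
    then have eq: "?S \<gamma> = sigma_sets (space M) (\<Union>\<beta>\<in>{\<beta>. \<beta> < \<gamma>}. ?S \<beta>)"
      by (rule sigma_iter_limit)
    have below: "?S \<beta> \<subseteq> ?S \<gamma>" if "\<beta> < \<gamma>" for \<beta>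
      using that unfolding eq by (auto intro: sigma_sets.Basic)
    have "?S \<beta> \<subseteq> opG M L \<tau> (?S \<gamma>)" if "\<beta> < \<gamma>" for \<beta>
      using less.IH[OF that] opG_mono[OF below[OF that]] by blast
    then have "(\<Union>\<beta>\<in>{\<beta>. \<beta> < \<gamma>}. ?S \<beta>) \<subseteq> opG M L \<tau> (?S \<gamma>)" by blast
    then have "?S \<gamma> \<subseteq> opG M L \<tau> (?S \<gamma>)"
      unfolding eq by (rule sigma_algebra.sigma_sets_subset[OF opG_sigma_algebra])
    with below show ?thesis by blast
  qed
qed

lemma sigma_iter_mono:
  assumes "\<Sigma>0 \<subseteq> opG M L \<tau> \<Sigma>0" "\<beta> \<le> \<gamma>"
  shows "sigma_iter M L \<tau> \<Sigma>0 \<beta> \<subseteq> sigma_iter M L \<tau> \<Sigma>0 (\<gamma>::'o::wellorder)"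
proof (cases "\<beta> = \<gamma>")
  case False
  with assms(2) have "\<beta> < \<gamma>" by simp
  then show ?thesis using sigma_iter_mono_and_subset_opG[OF assms(1), of \<gamma>] by blast
qed simp

lemma sigma_iter_subset_sets:
  assumes "\<Sigma>0 \<subseteq> opG M L \<tau> \<Sigma>0"
  shows "sigma_iter M L \<tau> \<Sigma>0 (\<alpha>::'o::wellorder) \<subseteq> sets M"
  using sigma_iter_mono_and_subset_opG[OF assms, of \<alpha>] opG_subset_sets[of M L \<tau>] by blast

lemma sigma_iter_sigma_algebra:
  assumes "sigma_algebra (space M) \<Sigma>0"
  shows "sigma_algebra (space M) (sigma_iter M L \<tau> \<Sigma>0 (\<alpha>::'o::wellorder))"
proof (induction \<alpha> rule: less_induct)
  case (less \<alpha>)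
  show ?case
  proof (cases \<alpha> rule: ordinal_cases)
    case 1
    with assms show ?thesis by (simp add: sigma_iter_bottom)
  next
    case 2
    then show ?thesis by (simp add: sigma_iter_successor opG_sigma_algebra)
  next
    case 3
    have "(\<Union>\<beta>\<in>{\<beta>. \<beta> < \<alpha>}. sigma_iter M L \<tau> \<Sigma>0 \<beta>) \<subseteq> Pow (space M)"
      using less unfolding sigma_algebra_iff2 by blast
    then show ?thesis
      by (simp add: sigma_iter_limit[OF 3] sigma_algebra_sigma_sets)
  qed
qed

lemma opG_sigma_iter_subset_limit:
  fixes lam \<beta> :: "'o::wellorder"
  assumes "is_limit lam" "\<beta> < lam"
  shows "opG M L \<tau> (sigma_iter M L \<tau> \<Sigma>0 \<beta>) \<subseteq> (\<Union>\<gamma>\<in>{\<gamma>. \<gamma> < lam}. sigma_iter M L \<tau> \<Sigma>0 \<gamma>)"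
proof -
  obtain s where "s < lam" "\<beta> < s" "\<forall>\<gamma><s. \<gamma> \<le> \<beta>"
    using limit_successor_less[OF assms] .
  then show ?thesis using sigma_iter_successor[of \<beta> s M L \<tau> \<Sigma>0] by blast
qed

lemma Int_stable_UN_chain:
  fixes F :: "'i::linorder \<Rightarrow> 'a set set"
  assumes "\<And>i. i \<in> I \<Longrightarrow> Int_stable (F i)"
    and "\<And>i j. i \<in> I \<Longrightarrow> j \<in> I \<Longrightarrow> i \<le> j \<Longrightarrow> F i \<subseteq> F j"
  shows "Int_stable (\<Union>i\<in>I. F i)"
proof (rule Int_stableI)
  fix A B assume "A \<in> (\<Union>i\<in>I. F i)" "B \<in> (\<Union>i\<in>I. F i)"
  then obtain i j where ij: "i \<in> I" "j \<in> I" "A \<in> F i" "B \<in> F j" by blast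
  obtain k where "k \<in> I" "A \<in> F k" "B \<in> F k"
  proof (cases "i \<le> j")
    case True
    with ij assms(2)[of i j] that[of j] show ?thesis by blast
  next
    case False
    then have "j \<le> i" by simp
    with ij assms(2)[of j i] that[of i] show ?thesis by blast
  qed
  then show "A \<inter> B \<in> (\<Union>i\<in>I. F i)"
    using assms(1) by (blast dest: Int_stableD)
qed

lemma measure_level_set_in_opG:
  assumes "LMP M L \<tau>" "a \<in> L" "E \<in> \<Lambda>" "E \<in> sets M"
  shows "{x \<in> space M. measure (\<tau> a x) E = c} \<in> opG M L \<tau> \<Lambda>"
proof -
  have "\<tau> a \<in> M \<rightarrow>\<^sub>M subprob_algebra M"
    using assms(1,2) unfolding LMP_def by blast
  then have "(\<lambda>x. measure (\<tau> a x) E) \<in> borel_measurable M"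
    using measurable_compose measurable_measure_subprob_algebra assms(4) by blast
  then have "{x \<in> space M. measure (\<tau> a x) E = c} \<in> sets M" by measurable
  moreover have "R_closed (relT M L \<tau> \<Lambda>) {x \<in> space M. measure (\<tau> a x) E = c}"
    using assms(2,3) unfolding R_closed_def relT_def by auto
  ultimately show ?thesis unfolding opG_def closed_sets_def by blast
qed

lemma rel_of_subset_relT:
  assumes "\<And>a E c. a \<in> L \<Longrightarrow> E \<in> \<Lambda> \<Longrightarrow> {x \<in> space M. measure (\<tau> a x) E = c} \<in> \<Gamma>"
  shows "rel_of M \<Gamma> \<subseteq> relT M L \<tau> \<Lambda>"
proof (rule subrelI)
  fix s t assume "(s, t) \<in> rel_of M \<Gamma>"
  then have st: "s \<in> space M" "t \<in> space M" and same: "\<And>A. A \<in> \<Gamma> \<Longrightarrow> s \<in> A \<longleftrightarrow> t \<in> A"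
    by (auto simp: rel_of_def)
  have "measure (\<tau> a s) E = measure (\<tau> a t) E" if "a \<in> L" "E \<in> \<Lambda>" for a E
    using same[OF assms[OF that, of "measure (\<tau> a s) E"]] st by simp
  with st show "(s, t) \<in> relT M L \<tau> \<Lambda>" unfolding relT_def by simp
qed

lemma finite_measure_eq_on_sigma_sets:
  assumes "finite_measure \<mu>" "finite_measure \<nu>" "sets \<mu> = sets \<nu>"
    and "Int_stable G" "G \<subseteq> sets \<mu>"
    and eq: "\<And>A. A \<in> G \<Longrightarrow> measure \<mu> A = measure \<nu> A"
    and space: "measure \<mu> (space \<mu>) = measure \<nu> (space \<nu>)"
    and A: "A \<in> sigma_sets (space \<mu>) G"
  shows "measure \<mu> A = measure \<nu> A"
proof -
  interpret \<mu>: finite_measure \<mu> by fact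
  interpret \<nu>: finite_measure \<nu> by fact
  have \<Omega>: "space \<nu> = space \<mu>" using assms(3) by (rule sets_eq_imp_space_eq[symmetric])
  have gen: "sigma_sets (space \<mu>) G \<subseteq> sets \<mu>" by (rule sets.sigma_sets_subset) fact
  have "G \<subseteq> Pow (space \<mu>)" using assms(5) sets.sets_into_space by blast
  from assms(4) this A show ?thesis
  proof (induction rule: sigma_sets_induct_disjoint)
    case (compl A)
    then have "A \<in> sets \<mu>" "A \<in> sets \<nu>" using gen assms(3) by auto
    then show ?case
      using compl.IH space \<mu>.finite_measure_compl[of A] \<nu>.finite_measure_compl[of A, unfolded \<Omega>]
      by (simp add: \<Omega>)
  next
    case (union A)
    with gen assms(3) have "range A \<subseteq> sets \<mu>" "range A \<subseteq> sets \<nu>" by auto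
    then have "(\<lambda>i. measure \<mu> (A i)) sums measure \<mu> (\<Union>i. A i)"
      and \<nu>_sums: "(\<lambda>i. measure \<nu> (A i)) sums measure \<nu> (\<Union>i. A i)"
      using \<mu>.finite_measure_UNION \<nu>.finite_measure_UNION union.hyps(1) by blast+
    then have "(\<lambda>i. measure \<nu> (A i)) sums measure \<mu> (\<Union>i. A i)"
      using union.IH by simp
    then show ?case using \<nu>_sums by (rule sums_unique2)
  qed (use eq in auto)
qed

lemma relT_subset_relT_sigma_sets:
  assumes "LMP M L \<tau>" "Int_stable \<Lambda>" "\<Lambda> \<subseteq> sets M" "space M \<in> \<Lambda>"
  shows "relT M L \<tau> \<Lambda> \<subseteq> relT M L \<tau> (sigma_sets (space M) \<Lambda>)"
proof (rule subrelI)
  fix s t assume "(s, t) \<in> relT M L \<tau> \<Lambda>"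
  then have st: "s \<in> space M" "t \<in> space M"
    and agree: "\<And>a E. a \<in> L \<Longrightarrow> E \<in> \<Lambda> \<Longrightarrow> measure (\<tau> a s) E = measure (\<tau> a t) E"
    by (auto simp: relT_def)
  have "measure (\<tau> a s) E = measure (\<tau> a t) E"
    if a: "a \<in> L" and E: "E \<in> sigma_sets (space M) \<Lambda>" for a E
  proof -
    have "\<tau> a \<in> M \<rightarrow>\<^sub>M subprob_algebra M"
      using assms(1) a unfolding LMP_def by blast
    then have "subprob_space (\<tau> a x) \<and> sets (\<tau> a x) = sets M" if "x \<in> space M" for x
      using measurable_space[of "\<tau> a" M "subprob_algebra M" x] that
      by (auto simp: space_subprob_algebra)
    with st have fin: "finite_measure (\<tau> a s)" "finite_measure (\<tau> a t)"
      and sets: "sets (\<tau> a s) = sets M" "sets (\<tau> a t) = sets M"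
      by (auto simp: subprob_space_def)
    have spaces: "space (\<tau> a s) = space M" "space (\<tau> a t) = space M"
      using sets by (metis sets_eq_imp_space_eq)+
    show ?thesis
    proof (rule finite_measure_eq_on_sigma_sets[OF fin])
      show "sets (\<tau> a s) = sets (\<tau> a t)" "\<Lambda> \<subseteq> sets (\<tau> a s)"
        using sets assms(3) by simp_all
      show "measure (\<tau> a s) (space (\<tau> a s)) = measure (\<tau> a t) (space (\<tau> a t))"
        using agree[OF a assms(4)] spaces by simp
      show "E \<in> sigma_sets (space (\<tau> a s)) \<Lambda>"
        using E spaces by simp
    qed (use assms(2) agree[OF a] in auto)
  qed
  with st show "(s, t) \<in> relT M L \<tau> (sigma_sets (space M) \<Lambda>)"
    unfolding relT_def by simp
qed

lemma state_bisim_rel_of: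
  assumes "rel_of M \<Gamma> \<subseteq> relT M L \<tau> (closed_sets M (rel_of M \<Gamma>))"
  shows "state_bisim M L \<tau> (rel_of M \<Gamma>)"
  using assms unfolding state_bisim_def relT_def by (auto simp: rel_of_def sym_def)

lemma sigma_iter_limit_generator:
  fixes lam :: "'o::wellorder"
  assumes "sigma_algebra (space M) \<Sigma>0" "\<Sigma>0 \<subseteq> opG M L \<tau> \<Sigma>0" "is_limit lam"
  defines "G \<equiv> \<Union>\<beta>\<in>{\<beta>. \<beta> < lam}. sigma_iter M L \<tau> \<Sigma>0 \<beta>"
  shows "Int_stable G" "G \<subseteq> sets M" "space M \<in> G"
proof -
  let ?S = "sigma_iter M L \<tau> \<Sigma>0"
  have stage_algebra: "algebra (space M) (?S \<beta>)" for \<beta>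
    using sigma_iter_sigma_algebra[OF assms(1)] by (rule sigma_algebra.axioms(1))
  show "Int_stable G"
    unfolding G_def
  proof (rule Int_stable_UN_chain)
    show "Int_stable (?S \<beta>)" for \<beta> by (rule algebra.Int_stable[OF stage_algebra])
    show "?S \<beta> \<subseteq> ?S \<gamma>" if "\<beta> \<le> \<gamma>" for \<beta> \<gamma> by (rule sigma_iter_mono[OF assms(2) that])
  qed
  show "G \<subseteq> sets M"
    unfolding G_def using sigma_iter_subset_sets[OF assms(2)] by blast
  obtain \<beta> where "\<beta> < lam" using assms(3) unfolding is_limit_def by blast
  then show "space M \<in> G" unfolding G_def using algebra.top[OF stage_algebra] by blast
qed

lemma measure_level_set_in_sigma_iter_limit:
  fixes lam \<beta> :: "'o::wellorder"
  assumes "LMP M L \<tau>" "\<Sigma>0 \<subseteq> opG M L \<tau> \<Sigma>0" "is_limit lam"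
    and "a \<in> L" "\<beta> < lam" "E \<in> sigma_iter M L \<tau> \<Sigma>0 \<beta>"
  shows "{x \<in> space M. measure (\<tau> a x) E = c} \<in> sigma_iter M L \<tau> \<Sigma>0 lam"
proof -
  have "{x \<in> space M. measure (\<tau> a x) E = c} \<in> opG M L \<tau> (sigma_iter M L \<tau> \<Sigma>0 \<beta>)"
    using assms(1,4,6) sigma_iter_subset_sets[OF assms(2)] by (blast intro: measure_level_set_in_opG)
  then have "{x \<in> space M. measure (\<tau> a x) E = c} \<in> (\<Union>\<gamma>\<in>{\<gamma>. \<gamma> < lam}. sigma_iter M L \<tau> \<Sigma>0 \<gamma>)"
    using opG_sigma_iter_subset_limit[OF assms(3,5)] by blast
  then show ?thesis
    unfolding sigma_iter_limit[OF assms(3)] by (rule sigma_sets.Basic)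
qed

lemma rel_of_sigma_iter_limit_subset_relT:
  fixes lam :: "'o::wellorder"
  assumes "LMP M L \<tau>" "sigma_algebra (space M) \<Sigma>0" "\<Sigma>0 \<subseteq> opG M L \<tau> \<Sigma>0" "is_limit lam"
  shows "rel_of M (sigma_iter M L \<tau> \<Sigma>0 lam) \<subseteq> relT M L \<tau> (sigma_iter M L \<tau> \<Sigma>0 lam)"
proof -
  let ?G = "\<Union>\<beta>\<in>{\<beta>. \<beta> < lam}. sigma_iter M L \<tau> \<Sigma>0 \<beta>"
  have "rel_of M (sigma_iter M L \<tau> \<Sigma>0 lam) \<subseteq> relT M L \<tau> ?G"
  proof (rule rel_of_subset_relT)
    fix a E c assume "a \<in> L" "E \<in> ?G"
    then show "{x \<in> space M. measure (\<tau> a x) E = c} \<in> sigma_iter M L \<tau> \<Sigma>0 lam"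
      using measure_level_set_in_sigma_iter_limit[OF assms(1,3,4)] by blast
  qed
  also have "\<dots> \<subseteq> relT M L \<tau> (sigma_sets (space M) ?G)"
    using sigma_iter_limit_generator[OF assms(2-4)] by (rule relT_subset_relT_sigma_sets[OF assms(1)])
  finally show ?thesis
    unfolding sigma_iter_limit[OF assms(4)] .
qed

theorem corollary3p10:
  fixes M :: "'a measure" and L :: "'l set" and \<tau> :: "'l \<Rightarrow> 'a \<Rightarrow> 'a measure"
    and \<Sigma>0 :: "'a set set" and lam :: "'o::wellorder"
  assumes "LMP M L \<tau>"
    and "sigma_algebra (space M) \<Sigma>0" and "\<Sigma>0 \<subseteq> sets M"
    and "rel_of M \<Sigma>0 = relT M L \<tau> \<Sigma>0"
    and "is_limit lam"
    and "closed_sets M (rel_of M (sigma_iter M L \<tau> \<Sigma>0 lam)) = sigma_iter M L \<tau> \<Sigma>0 lam"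
  shows "state_bisim M L \<tau> (rel_of M (sigma_iter M L \<tau> \<Sigma>0 lam))"
proof -
  have "\<Sigma>0 \<subseteq> opG M L \<tau> \<Sigma>0"
    using subset_closed_sets_rel_of[OF assms(3)] assms(4) by (simp add: opG_def)
  then have "rel_of M (sigma_iter M L \<tau> \<Sigma>0 lam) \<subseteq> relT M L \<tau> (sigma_iter M L \<tau> \<Sigma>0 lam)"
    using assms(1,2,5) by (intro rel_of_sigma_iter_limit_subset_relT)
  with assms(6) show ?thesis by (intro state_bisim_rel_of) simp
qed

end
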